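(* Let $\Bbbk$ be an algebraically closed field of characteristic zero, $G$ a finite group, $\chi:G\to\Bbbk^\times$ a linear character, $g\in Z(G)$, $n\geq 2$ the multiplicative order of $\chi(g)$, and $H$ the $\Bbbk$-algebra generated by $\Bbbk G$ and $z$ with relations $z^n=0$, $zs=\chi(s)sz$ ($s\in G$). Suppose $$(z^{l_1}h_1+\cdots+z^{l_t}h_t)=(z^{m_1}a_1+\cdots+z^{m_r}a_r),$$ where $n-1\geq l_1>\cdots>l_t\geq0$, $n-1\geq m_1>\cdots>m_r\geq0$, $h_i,a_j\in\Bbbk G$, $h_t\neq0$ and $a_r\neq0$. Then $l_t=m_r$ and $\langle h_t\rangle=\langle a_r\rangle$.
   Context: $(a)$ denotes the two-sided ideal of $H$ generated by $a$; for $h\in\Bbbk G$, $\langle h\rangle$ denotes the two-sided ideal of $\Bbbk G$ generated by $h$. *)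

theory Defs
  imports "HOL-Algebra.Ideal" "HOL-Computational_Algebra.Polynomial"
begin

definition mult_ord :: "'a::monoid_mult \<Rightarrow> nat" where
  "mult_ord x = (if \<exists>k>0. x ^ k = 1 then (LEAST k. k > 0 \<and> x ^ k = 1) else 0)"

definition kG_carrier :: "'g monoid \<Rightarrow> ('g \<Rightarrow> 'k::field) set" where
  "kG_carrier G = {f. \<forall>x. x \<notin> carrier G \<longrightarrow> f x = 0}"

definition kG_mult :: "'g monoid \<Rightarrow> ('g \<Rightarrow> 'k::field) \<Rightarrow> ('g \<Rightarrow> 'k) \<Rightarrow> 'g \<Rightarrow> 'k" where
  "kG_mult G f h = (\<lambda>x. if x \<in> carrier G
      then (\<Sum>y\<in>carrier G. f y * h (inv\<^bsub>G\<^esub> y \<otimes>\<^bsub>G\<^esub> x)) else 0)"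

definition group_algebra :: "'g monoid \<Rightarrow> ('g \<Rightarrow> 'k::field) ring" where
  "group_algebra G = \<lparr>carrier = kG_carrier G, monoid.mult = kG_mult G,
      one = (\<lambda>x. if x = \<one>\<^bsub>G\<^esub> then 1 else 0), zero = (\<lambda>x. 0), add = (\<lambda>f g x. f x + g x)\<rparr>"

text \<open>The algebra H generated by kG and z with z^n = 0 and z s = chi(s) s z.
  It is modelled by its normal form: H = (direct sum over i < n of z^i kG); an element
  is a coefficient function a i s = coefficient of the basis element z^i s.
  Since s z^j = chi(s)^(-j) z^j s, we have (z^i s)(z^j t) = chi(s)^(-j) z^(i+j) s t,
  which is 0 when i + j >= n.\<close>
definition H_carrier :: "'g monoid \<Rightarrow> nat \<Rightarrow> (nat \<Rightarrow> 'g \<Rightarrow> 'k::field) set" where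
  "H_carrier G n = {a. \<forall>i x. (n \<le> i \<or> x \<notin> carrier G) \<longrightarrow> a i x = 0}"

definition H_mult :: "'g monoid \<Rightarrow> ('g \<Rightarrow> 'k::field) \<Rightarrow> nat
    \<Rightarrow> (nat \<Rightarrow> 'g \<Rightarrow> 'k) \<Rightarrow> (nat \<Rightarrow> 'g \<Rightarrow> 'k) \<Rightarrow> nat \<Rightarrow> 'g \<Rightarrow> 'k" where
  "H_mult G \<chi> n a b = (\<lambda>k x. if k < n \<and> x \<in> carrier G
      then (\<Sum>i\<in>{0..k}. \<Sum>s\<in>carrier G.
              a i s * b (k - i) (inv\<^bsub>G\<^esub> s \<otimes>\<^bsub>G\<^esub> x) * inverse (\<chi> s) ^ (k - i))
      else 0)"

definition H_alg :: "'g monoid \<Rightarrow> ('g \<Rightarrow> 'k::field) \<Rightarrow> nat \<Rightarrow> (nat \<Rightarrow> 'g \<Rightarrow> 'k) ring" where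
  "H_alg G \<chi> n = \<lparr>carrier = H_carrier G n, monoid.mult = H_mult G \<chi> n,
      one = (\<lambda>i x. if i = 0 \<and> x = \<one>\<^bsub>G\<^esub> then 1 else 0), zero = (\<lambda>i x. 0), add = (\<lambda>a b i x. a i x + b i x)\<rparr>"

definition z_elem :: "'g monoid \<Rightarrow> nat \<Rightarrow> nat \<Rightarrow> 'g \<Rightarrow> 'k::field" where
  "z_elem G n = (\<lambda>i x. if i = 1 \<and> x = \<one>\<^bsub>G\<^esub> \<and> 1 < n then 1 else 0)"

definition kG_emb :: "('g \<Rightarrow> 'k::field) \<Rightarrow> nat \<Rightarrow> 'g \<Rightarrow> 'k" where
  "kG_emb h = (\<lambda>i x. if i = 0 then h x else 0)"

end

theory Submission
  imports Defs
begin

text \<open>Grade H by the powers of z, so that an element is a family of coefficients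
  w_k \<in> kG for k < n. For L < n and c \<in> kG, the elements vanishing in all degrees below L
  whose degree-L coefficient lies in \<langle>c\<rangle> form a two-sided ideal of H: in a product
  x w or w x, the degree-L coefficient only involves the degree-0 coefficient of x, which acts
  on w_L by a (twisted) multiplication in kG. Hence every element of the ideal generated by
  an element with lowest term z^L c vanishes below degree L and has its degree-L coefficient
  in \<langle>c\<rangle>. Applied to both generators of the common ideal this gives
  l_t \<le> m_r \<le> l_t and \<langle>h_t\<rangle> = \<langle>a_r\<rangle>.\<close>

lemma sum_group_translate:
  assumes "group G" "u \<in> carrier G"
  shows "(\<Sum>s\<in>carrier G. f s) = (\<Sum>v\<in>carrier G. f (u \<otimes>\<^bsub>G\<^esub> v))"
proof -
  interpret group G by fact
  show ?thesis
    by (rule sum.reindex_bij_witness[where i="\<lambda>v. u \<otimes>\<^bsub>G\<^esub> v" and j="\<lambda>s. inv\<^bsub>G\<^esub> u \<otimes>\<^bsub>G\<^esub> s"])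
       (use assms(2) in \<open>auto simp: m_assoc[symmetric]\<close>)
qed

lemma sum_triangle_swap:
  "(\<Sum>i\<in>{0..k}. \<Sum>j\<in>{0..i}. F j (i - j)) = (\<Sum>j\<in>{0..k}. \<Sum>p\<in>{0..k - j}. F j p)"
  for k :: nat
  by (simp add: atLeast0AtMost sum.triangle_reindex_eq[symmetric] pairs_le_eq_Sigma sum.Sigma)

lemma sum_sum_delta:
  assumes "finite A" "finite B"
  shows "(\<Sum>i\<in>A. \<Sum>s\<in>B. if i = a \<and> s = b then f i s else 0) = (if a \<in> A \<and> b \<in> B then f a b else 0)"
proof -
  have "(\<Sum>i\<in>A. \<Sum>s\<in>B. if i = a \<and> s = b then f i s else 0)
      = (\<Sum>i\<in>A. if i = a then (if b \<in> B then f a b else 0) else 0)"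
    using assms(2) by (intro sum.cong refl) (simp add: if_if_eq_conj[symmetric] cong: if_cong)
  then show ?thesis
    using assms(1) by simp
qed

lemma genideal_singleton_self: "a \<in> genideal R {a}"
  by (simp add: genideal_def)

lemma genideal_singleton_subsetI: "b \<in> genideal R {a} \<Longrightarrow> genideal R {b} \<subseteq> genideal R {a}"
  by (auto simp: genideal_def)

lemma genideal_zero_closed: "\<zero>\<^bsub>R\<^esub> \<in> genideal R S"
  by (auto simp: genideal_def dest: ideal.axioms(1) additive_subgroup.zero_closed)

lemma genideal_add_closed:
  "a \<in> genideal R S \<Longrightarrow> b \<in> genideal R S \<Longrightarrow> a \<oplus>\<^bsub>R\<^esub> b \<in> genideal R S"
  by (auto simp: genideal_def dest: ideal.axioms(1) additive_subgroup.a_closed)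

lemma genideal_mult_closed:
  assumes "a \<in> genideal R S" "x \<in> carrier R"
  shows genideal_l_mult_closed: "x \<otimes>\<^bsub>R\<^esub> a \<in> genideal R S"
    and genideal_r_mult_closed: "a \<otimes>\<^bsub>R\<^esub> x \<in> genideal R S"
  using assms by (auto simp: genideal_def intro: ideal.I_l_closed ideal.I_r_closed)

lemma strict_antimono_ivl_less:
  fixes l :: "nat \<Rightarrow> nat"
  assumes "\<forall>i\<in>{1..<t}. l (Suc i) < l i" "1 \<le> i" "i < j" "j \<le> t"
  shows "l j < l i"
  using lift_Suc_mono_less_ivl[of "{1..<t}" "\<lambda>i. - int (l i)" i j] assms by auto

locale finite_group_character = group G for G :: "'g monoid" (structure) +
  fixes \<chi> :: "'g \<Rightarrow> 'k::field"
  assumes finite_carrier: "finite (carrier G)"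
    and character_mult: "s \<in> carrier G \<Longrightarrow> u \<in> carrier G \<Longrightarrow> \<chi> (s \<otimes>\<^bsub>G\<^esub> u) = \<chi> s * \<chi> u"
    and character_one: "\<chi> \<one>\<^bsub>G\<^esub> = 1"
begin

lemma H_mult_assoc_lhs:
  assumes k: "k < n" and x: "x \<in> carrier G"
  shows "H_mult G \<chi> n (H_mult G \<chi> n a b) c k x =
    (\<Sum>i\<in>{0..k}. \<Sum>j\<in>{0..i}. \<Sum>u\<in>carrier G. \<Sum>v\<in>carrier G.
       a j u * b (i - j) v * c (k - i) (inv v \<otimes> (inv u \<otimes> x))
         * inverse (\<chi> u) ^ (k - j) * inverse (\<chi> v) ^ (k - i))"
  (is "_ = ?rhs")
proof -
  have "H_mult G \<chi> n (H_mult G \<chi> n a b) c k x =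
    (\<Sum>i\<in>{0..k}. \<Sum>s\<in>carrier G. (\<Sum>j\<in>{0..i}. \<Sum>u\<in>carrier G.
       a j u * b (i - j) (inv u \<otimes> s) * inverse (\<chi> u) ^ (i - j))
         * c (k - i) (inv s \<otimes> x) * inverse (\<chi> s) ^ (k - i))"
    using k x by (auto simp: H_mult_def intro!: sum.cong)
  also have "\<dots> = (\<Sum>i\<in>{0..k}. \<Sum>j\<in>{0..i}. \<Sum>u\<in>carrier G. \<Sum>s\<in>carrier G.
       a j u * b (i - j) (inv u \<otimes> s) * inverse (\<chi> u) ^ (i - j)
         * c (k - i) (inv s \<otimes> x) * inverse (\<chi> s) ^ (k - i))"
    by (simp only: sum_distrib_right sum.swap[of _ "carrier G" "{0.._}"])
       (intro sum.cong refl sum.swap)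
  also have "\<dots> = ?rhs"
  proof -
    have inner: "(\<Sum>s\<in>carrier G. a j u * b (i - j) (inv u \<otimes> s) * inverse (\<chi> u) ^ (i - j)
            * c (k - i) (inv s \<otimes> x) * inverse (\<chi> s) ^ (k - i)) =
          (\<Sum>v\<in>carrier G. a j u * b (i - j) v * c (k - i) (inv v \<otimes> (inv u \<otimes> x))
            * inverse (\<chi> u) ^ (k - j) * inverse (\<chi> v) ^ (k - i))"
      if ij: "i \<in> {0..k}" "j \<in> {0..i}" and u: "u \<in> carrier G" for i j u
    proof -
      have pow: "inverse (\<chi> u) ^ (i - j) * inverse (\<chi> u) ^ (k - i) = inverse (\<chi> u) ^ (k - j)"
        using ij by (simp flip: power_add)
      show ?thesis
        using u x pow
        by (subst sum_group_translate[OF is_group u])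
           (auto intro!: sum.cong simp: m_assoc[symmetric] inv_mult_group
             character_mult power_mult_distrib simp flip: mult.assoc)
    qed
    show ?thesis by (intro inner sum.cong[OF refl]) auto
  qed
  finally show ?thesis .
qed

lemma H_mult_assoc_rhs:
  assumes k: "k < n" and x: "x \<in> carrier G"
  shows "H_mult G \<chi> n a (H_mult G \<chi> n b c) k x =
    (\<Sum>j\<in>{0..k}. \<Sum>p\<in>{0..k - j}. \<Sum>u\<in>carrier G. \<Sum>v\<in>carrier G.
       a j u * b p v * c (k - j - p) (inv v \<otimes> (inv u \<otimes> x))
         * inverse (\<chi> u) ^ (k - j) * inverse (\<chi> v) ^ (k - j - p))"
  (is "_ = ?rhs")
proof -
  have "H_mult G \<chi> n a (H_mult G \<chi> n b c) k x =
    (\<Sum>j\<in>{0..k}. \<Sum>u\<in>carrier G. a j u * (\<Sum>p\<in>{0..k - j}. \<Sum>v\<in>carrier G.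
       b p v * c (k - j - p) (inv v \<otimes> (inv u \<otimes> x)) * inverse (\<chi> v) ^ (k - j - p))
         * inverse (\<chi> u) ^ (k - j))"
    using k x by (auto simp: H_mult_def intro!: sum.cong)
  also have "\<dots> = ?rhs"
    by (simp add: sum_distrib_left sum_distrib_right sum.swap[of _ "carrier G" "{0.._}"] ac_simps)
  finally show ?thesis .
qed

lemma H_mult_assoc: "H_mult G \<chi> n (H_mult G \<chi> n a b) c = H_mult G \<chi> n a (H_mult G \<chi> n b c)"
proof (intro ext)
  fix k x
  show "H_mult G \<chi> n (H_mult G \<chi> n a b) c k x = H_mult G \<chi> n a (H_mult G \<chi> n b c) k x"
  proof (cases "k < n \<and> x \<in> carrier G")
    case True
    define F where "F j p = (\<Sum>u\<in>carrier G. \<Sum>v\<in>carrier G.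
      a j u * b p v * c (k - j - p) (inv v \<otimes> (inv u \<otimes> x))
        * inverse (\<chi> u) ^ (k - j) * inverse (\<chi> v) ^ (k - j - p))" for j p
    have "H_mult G \<chi> n (H_mult G \<chi> n a b) c k x = (\<Sum>i\<in>{0..k}. \<Sum>j\<in>{0..i}. F j (i - j))"
      using True by (auto simp: H_mult_assoc_lhs F_def intro!: sum.cong)
    also have "\<dots> = (\<Sum>j\<in>{0..k}. \<Sum>p\<in>{0..k - j}. F j p)"
      by (rule sum_triangle_swap)
    also have "\<dots> = H_mult G \<chi> n a (H_mult G \<chi> n b c) k x"
      using True by (simp add: H_mult_assoc_rhs F_def)
    finally show ?thesis .
  qed (auto simp: H_mult_def)
qed

lemma H_mult_z_monomial_shift:
  assumes w: "w \<in> H_carrier G n"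
  shows "H_mult G \<chi> n (\<lambda>k y. if k = j \<and> y = \<one> \<and> j < n then 1 else 0) w
       = (\<lambda>k y. if k < n \<and> j \<le> k then w (k - j) y else 0)"
proof (intro ext)
  fix k y
  show "H_mult G \<chi> n (\<lambda>k y. if k = j \<and> y = \<one> \<and> j < n then 1 else 0) w k y
       = (if k < n \<and> j \<le> k then w (k - j) y else 0)"
    using w finite_carrier character_one
    by (auto simp: H_mult_def H_carrier_def if_distrib[of "\<lambda>c. c * _"] sum_sum_delta cong: if_cong)
qed

lemma H_mult_one_right:
  assumes w: "w \<in> H_carrier G n"
  shows "H_mult G \<chi> n w (\<lambda>k y. if k = 0 \<and> y = \<one> then 1 else 0) = w"
proof (intro ext)
  fix k y
  show "H_mult G \<chi> n w (\<lambda>k y. if k = 0 \<and> y = \<one> then 1 else 0) k y = w k y"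
    using w finite_carrier
    by (auto simp: H_mult_def H_carrier_def inv_solve_left' if_distrib[of "\<lambda>c. _ * c * _"]
        sum_sum_delta eq_commute[of k] eq_commute[of y] cong: if_cong)
qed

lemma H_mult_one_left:
  assumes "0 < n" and w: "w \<in> H_carrier G n"
  shows "H_mult G \<chi> n (\<lambda>k y. if k = 0 \<and> y = \<one> then 1 else 0) w = w"
  using H_mult_z_monomial_shift[OF w, of 0] assms by (auto simp: H_carrier_def fun_eq_iff)

lemma ring_H_alg:
  assumes n: "0 < n"
  shows "ring (H_alg G \<chi> n)"
proof (rule ringI)
  show "abelian_group (H_alg G \<chi> n)"
  proof (rule abelian_groupI)
    fix x assume x: "x \<in> carrier (H_alg G \<chi> n)"
    show "\<exists>y\<in>carrier (H_alg G \<chi> n). y \<oplus>\<^bsub>H_alg G \<chi> n\<^esub> x = \<zero>\<^bsub>H_alg G \<chi> n\<^esub>"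
      by (rule bexI[of _ "\<lambda>i s. - x i s"]) (use x in \<open>auto simp: H_alg_def H_carrier_def\<close>)
  qed (auto simp: H_alg_def H_carrier_def ac_simps)
  show "monoid (H_alg G \<chi> n)"
  proof (rule monoidI)
    fix x y
    show "x \<otimes>\<^bsub>H_alg G \<chi> n\<^esub> y \<in> carrier (H_alg G \<chi> n)"
      by (auto simp: H_alg_def H_carrier_def H_mult_def)
  qed (use n in \<open>auto simp: H_alg_def H_carrier_def H_mult_assoc H_mult_one_left H_mult_one_right\<close>)
qed (auto simp: H_alg_def H_carrier_def H_mult_def algebra_simps sum.distrib intro!: ext)

lemma H_alg_z_pow:
  assumes "0 < n"
  shows "z_elem G n [^]\<^bsub>H_alg G \<chi> n\<^esub> j = (\<lambda>k y. if k = j \<and> y = \<one> \<and> j < n then 1 else 0)"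
proof (induction j)
  case 0
  then show ?case using assms by (simp add: H_alg_def)
next
  case (Suc j)
  have "z_elem G n \<in> H_carrier G n"
    by (auto simp: z_elem_def H_carrier_def)
  have "z_elem G n [^]\<^bsub>H_alg G \<chi> n\<^esub> Suc j
      = H_mult G \<chi> n (\<lambda>k y. if k = j \<and> y = \<one> \<and> j < n then 1 else 0) (z_elem G n)"
    using Suc by (simp add: H_alg_def)
  also have "\<dots> = (\<lambda>k y. if k < n \<and> j \<le> k then z_elem G n (k - j) y else 0)"
    by (rule H_mult_z_monomial_shift) fact
  also have "\<dots> = (\<lambda>k y. if k = Suc j \<and> y = \<one> \<and> Suc j < n then 1 else 0)"
    by (auto simp: z_elem_def fun_eq_iff)
  finally show ?case .
qed

lemma H_alg_z_pow_mult_kG_emb: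
  assumes n: "0 < n" and c: "c \<in> kG_carrier G" and j: "j < n"
  shows "z_elem G n [^]\<^bsub>H_alg G \<chi> n\<^esub> j \<otimes>\<^bsub>H_alg G \<chi> n\<^esub> kG_emb c = (\<lambda>k y. if k = j then c y else 0)"
proof -
  have "kG_emb c \<in> H_carrier G n"
    using c n by (auto simp: kG_emb_def H_carrier_def kG_carrier_def)
  have "z_elem G n [^]\<^bsub>H_alg G \<chi> n\<^esub> j \<otimes>\<^bsub>H_alg G \<chi> n\<^esub> kG_emb c
      = H_mult G \<chi> n (\<lambda>k y. if k = j \<and> y = \<one> \<and> j < n then 1 else 0) (kG_emb c)"
    by (simp add: H_alg_z_pow[OF n]) (simp add: H_alg_def)
  also have "\<dots> = (\<lambda>k y. if k < n \<and> j \<le> k then kG_emb c (k - j) y else 0)"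
    by (rule H_mult_z_monomial_shift) fact
  also have "\<dots> = (\<lambda>k y. if k = j then c y else 0)"
    using j by (auto simp: kG_emb_def fun_eq_iff)
  finally show ?thesis .
qed

lemma H_alg_finsum:
  assumes n: "0 < n" and "finite A" "f \<in> A \<rightarrow> carrier (H_alg G \<chi> n)"
  shows "finsum (H_alg G \<chi> n) f A = (\<lambda>k y. \<Sum>i\<in>A. f i k y)"
  using assms(2,3)
proof (induction A rule: finite_induct)
  case empty
  interpret ring "H_alg G \<chi> n" by (rule ring_H_alg[OF n])
  show ?case by (simp only: finsum_empty) (simp add: H_alg_def)
next
  case (insert x F)
  interpret ring "H_alg G \<chi> n" by (rule ring_H_alg[OF n])
  show ?case
    using insert by (simp add: finsum_insert) (simp add: H_alg_def)
qed

end

definition H_lowdeg_ideal ::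
    "'g monoid \<Rightarrow> ('g \<Rightarrow> 'k::field) \<Rightarrow> nat \<Rightarrow> nat \<Rightarrow> ('g \<Rightarrow> 'k) \<Rightarrow> (nat \<Rightarrow> 'g \<Rightarrow> 'k) set" where
  "H_lowdeg_ideal G \<chi> n L c = {w \<in> carrier (H_alg G \<chi> n).
      (\<forall>k<L. \<forall>y. w k y = 0) \<and> w L \<in> genideal (group_algebra G) {c}}"

context finite_group_character
begin

lemma H_mult_vanish_below:
  assumes "\<forall>k<L. \<forall>y. w k y = 0" and "k < L"
  shows "H_mult G \<chi> n x w k y = 0" and "H_mult G \<chi> n w x k y = 0"
  using assms by (auto simp: H_mult_def intro!: sum.neutral)

lemma H_mult_lowdeg_coeff_left:
  assumes w: "\<forall>k<L. \<forall>y. w k y = 0" and L: "L < n"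
  shows "H_mult G \<chi> n x w L = (\<lambda>s. x 0 s * inverse (\<chi> s) ^ L) \<otimes>\<^bsub>group_algebra G\<^esub> w L"
proof (intro ext)
  fix y
  show "H_mult G \<chi> n x w L y = ((\<lambda>s. x 0 s * inverse (\<chi> s) ^ L) \<otimes>\<^bsub>group_algebra G\<^esub> w L) y"
    using w L
    by (simp add: H_mult_def group_algebra_def kG_mult_def ac_simps)
       (subst sum.mono_neutral_right[of "{0..L}" "{0}"]; auto)
qed

lemma H_mult_lowdeg_coeff_right:
  assumes w: "\<forall>k<L. \<forall>y. w k y = 0" and L: "L < n"
  shows "H_mult G \<chi> n w x L = w L \<otimes>\<^bsub>group_algebra G\<^esub> x 0"
proof (intro ext)
  fix y
  show "H_mult G \<chi> n w x L y = (w L \<otimes>\<^bsub>group_algebra G\<^esub> x 0) y"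
    using w L
    by (simp add: H_mult_def group_algebra_def kG_mult_def)
       (subst sum.mono_neutral_right[of "{0..L}" "{L}"]; auto)
qed

lemma H_lowdeg_ideal_mult_closed:
  assumes L: "L < n" and w: "w \<in> H_lowdeg_ideal G \<chi> n L c" and x: "x \<in> carrier (H_alg G \<chi> n)"
  shows "x \<otimes>\<^bsub>H_alg G \<chi> n\<^esub> w \<in> H_lowdeg_ideal G \<chi> n L c"
    and "w \<otimes>\<^bsub>H_alg G \<chi> n\<^esub> x \<in> H_lowdeg_ideal G \<chi> n L c"
proof -
  have low: "\<forall>k<L. \<forall>y. w k y = 0" and coeff: "w L \<in> genideal (group_algebra G) {c}"
    using w by (auto simp: H_lowdeg_ideal_def)
  have "x 0 \<in> carrier (group_algebra G)" "(\<lambda>s. x 0 s * inverse (\<chi> s) ^ L) \<in> carrier (group_algebra G)"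
    using x by (auto simp: group_algebra_def kG_carrier_def H_alg_def H_carrier_def)
  then have "H_mult G \<chi> n x w L \<in> genideal (group_algebra G) {c}"
    and "H_mult G \<chi> n w x L \<in> genideal (group_algebra G) {c}"
    using coeff low L
    by (simp_all add: H_mult_lowdeg_coeff_left H_mult_lowdeg_coeff_right
        genideal_l_mult_closed genideal_r_mult_closed)
  then show "x \<otimes>\<^bsub>H_alg G \<chi> n\<^esub> w \<in> H_lowdeg_ideal G \<chi> n L c"
    and "w \<otimes>\<^bsub>H_alg G \<chi> n\<^esub> x \<in> H_lowdeg_ideal G \<chi> n L c"
    using low by (auto simp: H_lowdeg_ideal_def H_alg_def H_mult_vanish_below H_carrier_def H_mult_def)
qed

lemma ideal_H_lowdeg_ideal:
  assumes L: "L < n"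
  shows "ideal (H_lowdeg_ideal G \<chi> n L c) (H_alg G \<chi> n)"
proof (rule idealI)
  show "ring (H_alg G \<chi> n)"
    using L by (intro ring_H_alg) simp
  then interpret H: ring "H_alg G \<chi> n" .
  show "subgroup (H_lowdeg_ideal G \<chi> n L c) (add_monoid (H_alg G \<chi> n))"
  proof
    fix v w assume "v \<in> H_lowdeg_ideal G \<chi> n L c" "w \<in> H_lowdeg_ideal G \<chi> n L c"
    then show "v \<otimes>\<^bsub>add_monoid (H_alg G \<chi> n)\<^esub> w \<in> H_lowdeg_ideal G \<chi> n L c"
      using genideal_add_closed[of "v L" "group_algebra G" _ "w L"]
      by (auto simp: H_lowdeg_ideal_def H_alg_def H_carrier_def group_algebra_def)
  next
    fix w assume w: "w \<in> H_lowdeg_ideal G \<chi> n L c"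
    then have "w \<in> carrier (H_alg G \<chi> n)"
      by (simp add: H_lowdeg_ideal_def)
    then have "inv\<^bsub>add_monoid (H_alg G \<chi> n)\<^esub> w
        = (\<ominus>\<^bsub>H_alg G \<chi> n\<^esub> \<one>\<^bsub>H_alg G \<chi> n\<^esub>) \<otimes>\<^bsub>H_alg G \<chi> n\<^esub> w"
      by (simp add: H.l_minus) (simp add: a_inv_def)
    then show "inv\<^bsub>add_monoid (H_alg G \<chi> n)\<^esub> w \<in> H_lowdeg_ideal G \<chi> n L c"
      using H_lowdeg_ideal_mult_closed(1)[OF L w] by simp
  qed (use genideal_zero_closed[of "group_algebra G"] in
        \<open>auto simp: H_lowdeg_ideal_def H_alg_def H_carrier_def group_algebra_def\<close>)
qed (use H_lowdeg_ideal_mult_closed[OF L] in auto)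

lemma genideal_subset_H_lowdeg_ideal:
  assumes L: "L < n" and x: "x \<in> carrier (H_alg G \<chi> n)" and low: "\<forall>k<L. \<forall>y. x k y = 0"
  shows "genideal (H_alg G \<chi> n) {x} \<subseteq> H_lowdeg_ideal G \<chi> n L (x L)"
proof -
  interpret H: ring "H_alg G \<chi> n"
    using L by (intro ring_H_alg) simp
  show ?thesis
    using x low by (intro H.genideal_minimal ideal_H_lowdeg_ideal L)
      (simp add: H_lowdeg_ideal_def genideal_singleton_self)
qed

lemma H_alg_sum_lowest_term:
  fixes l :: "nat \<Rightarrow> nat" and h :: "nat \<Rightarrow> 'g \<Rightarrow> 'k"
  assumes n: "l 1 < n" and t: "1 \<le> t"
    and l_dec: "\<forall>i\<in>{1..<t}. l (Suc i) < l i"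
    and h: "\<forall>i\<in>{1..t}. h i \<in> carrier (group_algebra G)"
  defines "X \<equiv> \<Oplus>\<^bsub>H_alg G \<chi> n\<^esub>i\<in>{1..t}. z_elem G n [^]\<^bsub>H_alg G \<chi> n\<^esub> l i
                   \<otimes>\<^bsub>H_alg G \<chi> n\<^esub> kG_emb (h i)"
  shows "X \<in> carrier (H_alg G \<chi> n)" and "\<forall>k<l t. \<forall>y. X k y = 0" and "X (l t) = h t"
proof -
  have n_pos: "0 < n"
    using n by simp
  have l_ge: "l t \<le> l i" and l_eq: "l i = l t \<longleftrightarrow> i = t" if "i \<in> {1..t}" for i
    using strict_antimono_ivl_less[OF l_dec, of i t] that by (cases "i = t"; auto)+
  have l_n: "l i < n" if "i \<in> {1..t}" for i
    using strict_antimono_ivl_less[OF l_dec, of 1 i] that n by (cases "i = 1") auto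
  have terms: "z_elem G n [^]\<^bsub>H_alg G \<chi> n\<^esub> l i \<otimes>\<^bsub>H_alg G \<chi> n\<^esub> kG_emb (h i)
      = (\<lambda>k y. if k = l i then h i y else 0)" if "i \<in> {1..t}" for i
    using H_alg_z_pow_mult_kG_emb[OF n_pos _ l_n] h that by (simp add: group_algebra_def)
  have "(\<lambda>i. z_elem G n [^]\<^bsub>H_alg G \<chi> n\<^esub> l i \<otimes>\<^bsub>H_alg G \<chi> n\<^esub> kG_emb (h i))
      \<in> {1..t} \<rightarrow> carrier (H_alg G \<chi> n)"
    by (auto simp: H_alg_def H_carrier_def H_mult_def)
  then have X: "X = (\<lambda>k y. \<Sum>i\<in>{1..t}. if k = l i then h i y else 0)"
    unfolding X_def using terms by (auto simp: H_alg_finsum[OF n_pos] intro!: sum.cong)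
  with l_n h show "X \<in> carrier (H_alg G \<chi> n)"
    by (auto simp: H_alg_def H_carrier_def group_algebra_def kG_carrier_def intro!: sum.neutral)
       (meson atLeastAtMost_iff leD)
  show "\<forall>k<l t. \<forall>y. X k y = 0"
    using l_ge by (fastforce simp: X intro!: sum.neutral)
  show "X (l t) = h t"
    using t l_eq by (simp add: X eq_commute[of "l t"] cong: if_cong)
qed

lemma genideal_eq_imp_lowest_terms_eq:
  assumes X: "X \<in> carrier (H_alg G \<chi> n)" "\<forall>k<L. \<forall>y. X k y = 0" "X L \<noteq> (\<lambda>_. 0)"
    and Y: "Y \<in> carrier (H_alg G \<chi> n)" "\<forall>k<M. \<forall>y. Y k y = 0" "Y M \<noteq> (\<lambda>_. 0)"
    and eq: "genideal (H_alg G \<chi> n) {X} = genideal (H_alg G \<chi> n) {Y}"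
  shows "L = M \<and> genideal (group_algebra G) {X L} = genideal (group_algebra G) {Y M}"
proof -
  have L: "L < n" and M: "M < n"
    using X(1,3) Y(1,3) by (auto simp: H_alg_def H_carrier_def fun_eq_iff) (meson leI)+
  have "Y \<in> H_lowdeg_ideal G \<chi> n L (X L)"
    using eq genideal_singleton_self[of Y "H_alg G \<chi> n"]
    by (intro subsetD[OF genideal_subset_H_lowdeg_ideal[OF L X(1,2)]]) simp
  then have Y_low: "\<forall>k<L. Y k = (\<lambda>_. 0)" and Y_in: "Y L \<in> genideal (group_algebra G) {X L}"
    by (auto simp: H_lowdeg_ideal_def)
  have "X \<in> H_lowdeg_ideal G \<chi> n M (Y M)"
    using eq genideal_singleton_self[of X "H_alg G \<chi> n"]
    by (intro subsetD[OF genideal_subset_H_lowdeg_ideal[OF M Y(1,2)]]) simp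
  then have X_low: "\<forall>k<M. X k = (\<lambda>_. 0)" and X_in: "X M \<in> genideal (group_algebra G) {Y M}"
    by (auto simp: H_lowdeg_ideal_def)
  have "L = M"
    using Y_low X_low X(3) Y(3) by (meson linorder_neqE_nat)
  then show ?thesis
    using X_in Y_in by (auto dest: genideal_singleton_subsetI)
qed

end

theorem proposition3p5:
  fixes G :: "'g monoid" and \<chi> :: "'g \<Rightarrow> 'k::field_char_0" and g :: 'g and n :: nat
    and t r :: nat and l m :: "nat \<Rightarrow> nat" and h a :: "nat \<Rightarrow> 'g \<Rightarrow> 'k"
  assumes alg_closed: "\<forall>p :: 'k poly. degree p > 0 \<longrightarrow> (\<exists>x. poly p x = 0)"
    and grp: "group G" and fin: "finite (carrier G)"
    and chi_nz: "\<forall>s\<in>carrier G. \<chi> s \<noteq> 0"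
    and chi_hom: "\<forall>s\<in>carrier G. \<forall>u\<in>carrier G. \<chi> (s \<otimes>\<^bsub>G\<^esub> u) = \<chi> s * \<chi> u"
    and g_in: "g \<in> carrier G" and g_central: "\<forall>s\<in>carrier G. g \<otimes>\<^bsub>G\<^esub> s = s \<otimes>\<^bsub>G\<^esub> g"
    and n_def: "n = mult_ord (\<chi> g)" and n_ge: "n \<ge> 2"
    and t_pos: "t \<ge> 1" and l_bound: "l 1 \<le> n - 1"
    and l_dec: "\<forall>i\<in>{1..<t}. l i > l (Suc i)"
    and h_in: "\<forall>i\<in>{1..t}. h i \<in> carrier (group_algebra G)"
    and r_pos: "r \<ge> 1" and m_bound: "m 1 \<le> n - 1"
    and m_dec: "\<forall>j\<in>{1..<r}. m j > m (Suc j)"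
    and a_in: "\<forall>j\<in>{1..r}. a j \<in> carrier (group_algebra G)"
    and ht_nz: "h t \<noteq> \<zero>\<^bsub>group_algebra G\<^esub>" and ar_nz: "a r \<noteq> \<zero>\<^bsub>group_algebra G\<^esub>"
    and eq: "genideal (H_alg G \<chi> n)
               {\<Oplus>\<^bsub>H_alg G \<chi> n\<^esub>i\<in>{1..t}. z_elem G n [^]\<^bsub>H_alg G \<chi> n\<^esub> l i
                   \<otimes>\<^bsub>H_alg G \<chi> n\<^esub> kG_emb (h i)}
           = genideal (H_alg G \<chi> n)
               {\<Oplus>\<^bsub>H_alg G \<chi> n\<^esub>j\<in>{1..r}. z_elem G n [^]\<^bsub>H_alg G \<chi> n\<^esub> m j
                   \<otimes>\<^bsub>H_alg G \<chi> n\<^esub> kG_emb (a j)}"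
  shows "l t = m r \<and> genideal (group_algebra G) {h t} = genideal (group_algebra G) {a r}"
proof -
  interpret G: group G by (rule grp)
  have "\<chi> \<one>\<^bsub>G\<^esub> = 1"
    using chi_hom chi_nz by (metis G.l_one G.one_closed mult_cancel_right2)
  then interpret finite_group_character G \<chi>
    using grp fin chi_hom by unfold_locales auto
  have l1: "l 1 < n" and m1: "m 1 < n"
    using n_ge l_bound m_bound by linarith+
  note X = H_alg_sum_lowest_term[OF l1 t_pos l_dec h_in]
  note Y = H_alg_sum_lowest_term[OF m1 r_pos m_dec a_in]
  have "h t \<noteq> (\<lambda>_. 0)" and "a r \<noteq> (\<lambda>_. 0)"
    using ht_nz ar_nz by (simp_all add: group_algebra_def)
  then show ?thesis
    using genideal_eq_imp_lowest_terms_eq[OF X(1,2) _ Y(1,2) _ eq] X(3) Y(3) by simp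
qed

end
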